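(* Let $n\ge2$ and $\Delta\subset B_n$ a proper ideal. For each facet $(A;x)$ of $\mathrm{Bier}(B_n,\Delta)$ define $\chi(A;x)\in\{-1,0,1\}^n$ by $\chi(A;x)_a=-1$ if $a\in A\cup\{x\}$ and $a\le x$; $\chi(A;x)_a=0$ if $a\notin A\cup\{x\}$; $\chi(A;x)_a=+1$ if $a\in A\cup\{x\}$ and $a>x$. Then ordering the facets so that $\chi$ increases in lexicographic order is a shelling order of $\mathrm{Bier}(B_n,\Delta)$.
   Context: $B_n$ is the Boolean lattice of subsets of $[1,n]=\{1,\dots,n\}$. A proper ideal $\Delta\subset B_n$ is a nonempty family of subsets of $[1,n]$ closed under taking subsets with $[1,n]\notin\Delta$. The Bier sphere $\mathrm{Bier}(B_n,\Delta)$ is the simplicial complex whose faces are the pairs $(B,C)$ with $B\subsetneq C\subseteq[1,n]$, $B\in\Delta$, $C\notin\Delta$, with $(B',C')$ a face of $(B,C)$ iff $B'\subseteq B$ and $C\subseteq C'$ (concretely $(B,C)$ is the vertex set $B\sqcup\{\bar d: d\notin C\}$ on $[1,n]\sqcup\{\bar1,\dots,\bar n\}$). Its facets are $(A;x):=(A,A\cup\{x\})$ with $A\in\Delta$, $x\notin A$, $A\cup\{x\}\notin\Delta$. Lexicographic order: $u<_{\mathrm{lex}}v$ if at the first coordinate where they differ, $u$ is smaller. A shelling order of a pure complex is an ordering $F_1,F_2,\dots$ of its facets such that for each $k\ge2$, $F_k\cap(F_1\cup\dots\cup F_{k-1})$ is pure of dimension $\dim F_k-1$. *)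

theory Defs
  imports Main
begin

text \<open>Ground set [1,n] = {1..n}. Vertices of the Bier sphere live in nat + nat:
  Inl d is the vertex d, Inr d is the vertex bar d.\<close>

definition proper_ideal :: "nat \<Rightarrow> nat set set \<Rightarrow> bool" where
  "proper_ideal n D \<longleftrightarrow> D \<noteq> {} \<and> (\<forall>B\<in>D. B \<subseteq> {1..n}) \<and>
     (\<forall>B\<in>D. \<forall>B'. B' \<subseteq> B \<longrightarrow> B' \<in> D) \<and> {1..n} \<notin> D"

definition bier_vs :: "nat \<Rightarrow> nat set \<Rightarrow> nat set \<Rightarrow> (nat + nat) set" where
  "bier_vs n B C = Inl ` B \<union> Inr ` ({1..n} - C)"

definition bier :: "nat \<Rightarrow> nat set set \<Rightarrow> (nat + nat) set set" where
  "bier n D = {bier_vs n B C | B C. B \<subset> C \<and> C \<subseteq> {1..n} \<and> B \<in> D \<and> C \<notin> D}"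

definition facets :: "'a set set \<Rightarrow> 'a set set" where
  "facets K = {F \<in> K. \<forall>G\<in>K. F \<subseteq> G \<longrightarrow> G = F}"

definition sdim :: "'a set \<Rightarrow> int" where
  "sdim F = int (card F) - 1"

definition pure_of_dim :: "'a set set \<Rightarrow> int \<Rightarrow> bool" where
  "pure_of_dim K d \<longleftrightarrow> K \<noteq> {} \<and> (\<forall>F\<in>facets K. sdim F = d)"

text \<open>Shelling order of a pure complex K: an ordering Fs of all facets such that, for every
  k \<ge> 2 (0-based index k \<ge> 1), the subcomplex  F_k \<inter> (F_1 \<union> ... \<union> F_{k-1})  (faces of F_k
  lying in some earlier facet) is pure of dimension dim F_k - 1.\<close>
definition shelling_order :: "'a set set \<Rightarrow> 'a set list \<Rightarrow> bool" where
  "shelling_order K Fs \<longleftrightarrow> distinct Fs \<and> set Fs = facets K \<and>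
     (\<forall>k. 1 \<le> k \<and> k < length Fs \<longrightarrow>
        pure_of_dim {G. G \<subseteq> Fs ! k \<and> (\<exists>i<k. G \<subseteq> Fs ! i)} (sdim (Fs ! k) - 1))"

text \<open>Facet (A;x) = (A, A \<union> {x}) and its sign vector chi(A;x) in {-1,0,1}^n.\<close>
definition is_facet_pair :: "nat \<Rightarrow> nat set set \<Rightarrow> nat set \<Rightarrow> nat \<Rightarrow> bool" where
  "is_facet_pair n D A x \<longleftrightarrow> A \<in> D \<and> x \<in> {1..n} \<and> x \<notin> A \<and> insert x A \<notin> D"

definition chi :: "nat set \<Rightarrow> nat \<Rightarrow> nat \<Rightarrow> int" where
  "chi A x a = (if a \<in> insert x A then (if a \<le> x then -1 else 1) else 0)"

definition lex_less :: "nat \<Rightarrow> (nat \<Rightarrow> int) \<Rightarrow> (nat \<Rightarrow> int) \<Rightarrow> bool" where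
  "lex_less n u v \<longleftrightarrow> (\<exists>i\<in>{1..n}. (\<forall>j\<in>{1..<i}. u j = v j) \<and> u i < v i)"

end

(* The facets of Bier(B_n, D) are exactly the pairs (A;x).  To a facet (A;x) attach its
   restriction R(A;x): the vertices a \<in> A with a > x and the vertices bar d with d < x, d \<notin> A.
   Removing any single vertex of R(A;x) leaves a ridge that also lies in a facet with smaller
   sign vector (swap or drop a, resp. add d to A or move the marked point to d).  Conversely,
   every facet with smaller sign vector misses some vertex of R(A;x): otherwise comparing the
   sign vectors at their first difference shows A \<union> {x} \<subseteq> B for the earlier facet (B;y),
   putting A \<union> {x} into the ideal.  Hence the intersection of (A;x) with the earlier facets
   is generated by the ridges (A;x) - {v}, v \<in> R(A;x), and is pure of codimension one. *)

theory Submission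
  imports Defs
begin

lemma distinct_if_sorted_wrt_asymp:
  assumes "asymp R" and "sorted_wrt R xs"
  shows "distinct xs"
  unfolding distinct_conv_nth
proof (intro allI impI)
  fix i j assume "i < length xs" "j < length xs" "i \<noteq> j"
  then have "R (xs ! i) (xs ! j) \<or> R (xs ! j) (xs ! i)"
    using sorted_wrt_nth_less[OF assms(2)] by (cases "i < j") auto
  then show "xs ! i \<noteq> xs ! j"
    using asympD[OF assms(1), of "xs ! i" "xs ! i"] by auto
qed

lemma index_less_if_sorted_wrt_asymp:
  assumes "asymp R" and "sorted_wrt R xs" and "j < length xs" and "k < length xs"
    and "R (xs ! j) (xs ! k)"
  shows "j < k"
proof (rule ccontr)
  assume "\<not> j < k"
  then consider "k = j" | "k < j" by linarith
  then show False
    using assms sorted_wrt_nth_less[OF assms(2)] asympD[OF assms(1)] by cases blast+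
qed

lemma sdim_remove: "finite F \<Longrightarrow> v \<in> F \<Longrightarrow> sdim (F - {v}) = sdim F - 1"
proof -
  assume "finite F" "v \<in> F"
  then have "card F > 0" using card_gt_0_iff by blast
  with \<open>finite F\<close> \<open>v \<in> F\<close> show ?thesis by (simp add: sdim_def of_nat_diff)
qed

lemma pure_of_dim_by_removal:
  assumes "finite F" and "Es \<noteq> {}"
    and removal: "\<And>E. E \<in> Es \<Longrightarrow> \<exists>v \<in> F - E. \<exists>E' \<in> Es. F - {v} \<subseteq> E'"
  shows "pure_of_dim {G. G \<subseteq> F \<and> (\<exists>E \<in> Es. G \<subseteq> E)} (sdim F - 1)"
    (is "pure_of_dim ?K _")
proof -
  have "{} \<in> ?K" using \<open>Es \<noteq> {}\<close> by blast
  moreover have "sdim G = sdim F - 1" if "G \<in> facets ?K" for G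
  proof -
    from that have "G \<in> ?K" and maximal: "\<And>H. H \<in> ?K \<Longrightarrow> G \<subseteq> H \<Longrightarrow> H = G"
      unfolding facets_def by auto
    then obtain E where "E \<in> Es" "G \<subseteq> F" "G \<subseteq> E" by blast
    obtain v E' where "v \<in> F" "v \<notin> E" "E' \<in> Es" "F - {v} \<subseteq> E'"
      using removal[OF \<open>E \<in> Es\<close>] by blast
    then have "F - {v} \<in> ?K" by blast
    moreover have "G \<subseteq> F - {v}" using \<open>G \<subseteq> F\<close> \<open>G \<subseteq> E\<close> \<open>v \<notin> E\<close> by blast
    ultimately have "F - {v} = G" by (rule maximal)
    then show ?thesis using sdim_remove[OF \<open>finite F\<close> \<open>v \<in> F\<close>] by simp
  qed
  ultimately show ?thesis unfolding pure_of_dim_def by blast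
qed

lemma shelling_orderI:
  assumes "distinct Fs" and "set Fs = facets K" and "\<forall>F \<in> set Fs. finite F"
    and removal: "\<And>i k. i < k \<Longrightarrow> k < length Fs \<Longrightarrow>
      \<exists>v \<in> Fs ! k - Fs ! i. \<exists>j<k. Fs ! k - {v} \<subseteq> Fs ! j"
  shows "shelling_order K Fs"
  unfolding shelling_order_def
proof (intro conjI allI impI)
  fix k assume k: "1 \<le> k \<and> k < length Fs"
  have "pure_of_dim {G. G \<subseteq> Fs ! k \<and> (\<exists>E \<in> (!) Fs ` {..<k}. G \<subseteq> E)} (sdim (Fs ! k) - 1)"
  proof (rule pure_of_dim_by_removal)
    show "finite (Fs ! k)" using k assms(3) by simp
    have "Fs ! 0 \<in> (!) Fs ` {..<k}" using k by simp
    then show "(!) Fs ` {..<k} \<noteq> {}" by blast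
    show "\<exists>v \<in> Fs ! k - E. \<exists>E' \<in> (!) Fs ` {..<k}. Fs ! k - {v} \<subseteq> E'"
      if "E \<in> (!) Fs ` {..<k}" for E
    proof -
      from that obtain i where "i < k" "E = Fs ! i" by blast
      then obtain v j where "v \<in> Fs ! k - E" "j < k" "Fs ! k - {v} \<subseteq> Fs ! j"
        using removal k by blast
      then show ?thesis by blast
    qed
  qed
  then show "pure_of_dim {G. G \<subseteq> Fs ! k \<and> (\<exists>i<k. G \<subseteq> Fs ! i)} (sdim (Fs ! k) - 1)"
    by (simp add: Bex_def)
qed (use assms in auto)

definition bier_facet :: "nat \<Rightarrow> nat set \<times> nat \<Rightarrow> (nat + nat) set" where
  "bier_facet n = (\<lambda>(A, x). bier_vs n A (insert x A))"

lemma Inl_in_bier_vs_iff [simp]: "Inl a \<in> bier_vs n B C \<longleftrightarrow> a \<in> B"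
  by (auto simp: bier_vs_def)

lemma Inr_in_bier_vs_iff [simp]: "Inr d \<in> bier_vs n B C \<longleftrightarrow> d \<in> {1..n} \<and> d \<notin> C"
  by (auto simp: bier_vs_def)

lemma bier_vs_subset_iff:
  assumes "C \<subseteq> {1..n}" and "C' \<subseteq> {1..n}"
  shows "bier_vs n B C \<subseteq> bier_vs n B' C' \<longleftrightarrow> B \<subseteq> B' \<and> C' \<subseteq> C"
proof
  assume sub: "bier_vs n B C \<subseteq> bier_vs n B' C'"
  have "B \<subseteq> B'" using sub Inl_in_bier_vs_iff by blast
  moreover have "C' \<subseteq> C" using sub assms(2) Inr_in_bier_vs_iff by blast
  ultimately show "B \<subseteq> B' \<and> C' \<subseteq> C" ..
qed (auto simp: bier_vs_def)

lemma proper_ideal_subset: "proper_ideal n D \<Longrightarrow> A \<in> D \<Longrightarrow> A \<subseteq> {1..n}"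
  by (simp add: proper_ideal_def)

lemma proper_ideal_downward_closed: "proper_ideal n D \<Longrightarrow> A \<in> D \<Longrightarrow> B \<subseteq> A \<Longrightarrow> B \<in> D"
  by (simp add: proper_ideal_def)

lemma facet_pair_subset:
  "proper_ideal n D \<Longrightarrow> is_facet_pair n D A x \<Longrightarrow> insert x A \<subseteq> {1..n}"
  unfolding is_facet_pair_def using proper_ideal_subset by blast

lemma finite_bier_facet:
  assumes "proper_ideal n D" and "is_facet_pair n D A x"
  shows "finite (bier_facet n (A, x))"
proof -
  have "finite (insert x A)" using facet_pair_subset[OF assms] by (rule finite_subset) simp
  then show ?thesis by (simp add: bier_facet_def bier_vs_def)
qed

lemma bier_facet_in_bier:
  "proper_ideal n D \<Longrightarrow> is_facet_pair n D A x \<Longrightarrow> bier_vs n A (insert x A) \<in> bier n D"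
proof -
  assume "proper_ideal n D" "is_facet_pair n D A x"
  moreover from this have "insert x A \<subseteq> {1..n}" by (rule facet_pair_subset)
  ultimately show ?thesis unfolding bier_def is_facet_pair_def by blast
qed

lemma bier_face_subset_facet_pair:
  assumes "proper_ideal n D" and "B \<subset> C" and "C \<subseteq> {1..n}" and "B \<in> D" and "C \<notin> D"
  obtains A x where "is_facet_pair n D A x" and "B \<subseteq> A" and "insert x A \<subseteq> C"
proof -
  let ?M = "{A \<in> D. B \<subseteq> A \<and> A \<subseteq> C}"
  have "finite C" using assms(3) by (rule finite_subset) simp
  then have "finite ?M" by (rule rev_finite_subset[OF finite_Pow_iff[THEN iffD2]]) auto
  moreover have "B \<in> ?M" using assms by auto
  ultimately have "\<exists>A \<in> ?M. B \<subseteq> A \<and> (\<forall>A' \<in> ?M. A \<subseteq> A' \<longrightarrow> A = A')"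
    by (rule finite_has_maximal2)
  then obtain A where A: "A \<in> ?M" and maximal: "\<forall>A' \<in> ?M. A \<subseteq> A' \<longrightarrow> A = A'"
    by blast
  have "A \<noteq> C" using A assms(5) by blast
  then obtain x where x: "x \<in> C" "x \<notin> A" using A by blast
  have "insert x A \<notin> D"
  proof
    assume "insert x A \<in> D"
    with A x have "insert x A \<in> ?M" by blast
    with maximal x show False by blast
  qed
  with A x assms(3) have "is_facet_pair n D A x" by (auto simp: is_facet_pair_def)
  with that A x show ?thesis by blast
qed

lemma facets_bier:
  assumes "proper_ideal n D"
  shows "facets (bier n D) = bier_facet n ` {(A, x). is_facet_pair n D A x}"
proof (intro equalityI subsetI)
  fix G assume "G \<in> facets (bier n D)"
  then have "G \<in> bier n D" and maximal: "\<And>H. H \<in> bier n D \<Longrightarrow> G \<subseteq> H \<Longrightarrow> H = G"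
    by (auto simp: facets_def)
  then obtain B C where BC: "G = bier_vs n B C" "B \<subset> C" "C \<subseteq> {1..n}" "B \<in> D" "C \<notin> D"
    unfolding bier_def by blast
  obtain A x where Ax: "is_facet_pair n D A x" "B \<subseteq> A" "insert x A \<subseteq> C"
    using bier_face_subset_facet_pair[OF assms BC(2-5)] .
  have "G \<subseteq> bier_vs n A (insert x A)"
    using BC Ax bier_vs_subset_iff[OF BC(3) facet_pair_subset[OF assms Ax(1)]] by blast
  then have "G = bier_facet n (A, x)"
    using maximal[OF bier_facet_in_bier[OF assms Ax(1)]] by (simp add: bier_facet_def)
  with Ax(1) show "G \<in> bier_facet n ` {(A, x). is_facet_pair n D A x}" by blast
next
  fix G assume "G \<in> bier_facet n ` {(A, x). is_facet_pair n D A x}"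
  then obtain A x where G: "G = bier_vs n A (insert x A)" and Ax: "is_facet_pair n D A x"
    unfolding bier_facet_def by auto
  show "G \<in> facets (bier n D)"
    unfolding facets_def
  proof (intro CollectI conjI ballI impI)
    show "G \<in> bier n D" using bier_facet_in_bier[OF assms Ax] G by simp
    fix H assume "H \<in> bier n D" "G \<subseteq> H"
    then obtain B C where H: "H = bier_vs n B C" "B \<subset> C" "C \<subseteq> {1..n}"
      unfolding bier_def by blast
    then have "A \<subseteq> B" "C \<subseteq> insert x A"
      using \<open>G \<subseteq> H\<close> G bier_vs_subset_iff[OF facet_pair_subset[OF assms Ax] H(3)] by auto
    with H(2) Ax have "B = A" "C = insert x A"
      unfolding is_facet_pair_def by blast+
    with G H(1) show "H = G" by simp
  qed
qed

lemma inj_on_bier_facet: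
  assumes "proper_ideal n D"
  shows "inj_on (bier_facet n) {(A, x). is_facet_pair n D A x}"
proof (rule inj_onI, clarsimp)
  fix A x B y
  assume Ax: "is_facet_pair n D A x" and By: "is_facet_pair n D B y"
    and eq: "bier_facet n (A, x) = bier_facet n (B, y)"
  have "bier_vs n A (insert x A) = bier_vs n B (insert y B)"
    using eq by (simp add: bier_facet_def)
  then have "A \<subseteq> B \<and> insert y B \<subseteq> insert x A" "B \<subseteq> A \<and> insert x A \<subseteq> insert y B"
    using bier_vs_subset_iff[OF facet_pair_subset[OF assms Ax] facet_pair_subset[OF assms By]]
      bier_vs_subset_iff[OF facet_pair_subset[OF assms By] facet_pair_subset[OF assms Ax]]
    by (metis order_refl)+
  then have "A = B \<and> insert x A = insert y B" by blast
  with Ax By show "A = B \<and> x = y"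
    unfolding is_facet_pair_def by blast
qed

lemma lex_lessI:
  assumes "m \<in> {1..n}" and "\<And>j. 1 \<le> j \<Longrightarrow> j < m \<Longrightarrow> u j = v j" and "u m < v m"
  shows "lex_less n u v"
  unfolding lex_less_def using assms by (intro bexI[of _ m]) auto

lemma asymp_lex_less: "asymp (lex_less n)"
proof
  fix u v assume "lex_less n u v"
  then obtain i where i: "\<forall>j\<in>{1..<i}. u j = v j" "u i < v i" "1 \<le> i"
    unfolding lex_less_def by auto
  show "\<not> lex_less n v u"
  proof
    assume "lex_less n v u"
    then obtain k where k: "\<forall>j\<in>{1..<k}. v j = u j" "v k < u k" "1 \<le> k"
      unfolding lex_less_def by auto
    show False
    proof (cases i k rule: linorder_cases)
      case less
      with i k(1) show False by auto
    next
      case equal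
      with i(2) k(2) show False by simp
    next
      case greater
      with i(1) k show False by auto
    qed
  qed
qed

definition restriction :: "nat \<Rightarrow> nat set \<Rightarrow> nat \<Rightarrow> (nat + nat) set" where
  "restriction n A x = Inl ` {a \<in> A. x < a} \<union> Inr ` {d \<in> {1..n}. d < x \<and> d \<notin> A}"

lemma restriction_subset_bier_facet: "restriction n A x \<subseteq> bier_vs n A (insert x A)"
  by (auto simp: restriction_def)

text \<open>Look at the first coordinate i where the sign vectors differ: the covering hypothesis
  forces x < i \<le> y, and below i the two vectors agree, which puts every element of
  A \<union> {x} into B.\<close>
lemma insert_subset_if_restriction_covered:
  assumes "insert x A \<subseteq> {1..n}"
    and covered: "restriction n A x \<subseteq> bier_vs n B (insert y B)"
    and lt: "lex_less n (chi B y) (chi A x)"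
  shows "insert x A \<subseteq> B"
proof -
  have upper: "a \<in> B" if "a \<in> A" "x < a" for a
  proof -
    from that have "Inl a \<in> restriction n A x" unfolding restriction_def by blast
    with covered show ?thesis by auto
  qed
  have lower: "d \<notin> insert y B" if "d \<in> {1..n}" "d < x" "d \<notin> A" for d
  proof -
    from that have "Inr d \<in> restriction n A x" unfolding restriction_def by blast
    with covered show ?thesis by auto
  qed
  from lt obtain i where i: "i \<in> {1..n}" "\<And>j. j \<in> {1..<i} \<Longrightarrow> chi B y j = chi A x j"
    "chi B y i < chi A x i"
    unfolding lex_less_def by blast
  have "x < i"
    using i(1,3) lower[of i] by (cases "i < x") (auto simp: chi_def split: if_splits)
  then have "i \<le> y"
    using i(3) upper[of i] by (auto simp: chi_def split: if_splits)
  show ?thesis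
  proof
    fix a assume a: "a \<in> insert x A"
    show "a \<in> B"
    proof (cases "x < a")
      case True
      with a upper show ?thesis by auto
    next
      case False
      with a \<open>x < i\<close> assms(1) have "a \<in> {1..<i}" by auto
      then have "chi B y a = chi A x a" by (rule i(2))
      with a False \<open>x < i\<close> \<open>i \<le> y\<close> show ?thesis
        by (auto simp: chi_def split: if_splits)
    qed
  qed
qed

lemma restriction_not_subset_earlier_facet:
  assumes pi: "proper_ideal n D" and Ax: "is_facet_pair n D A x" and By: "is_facet_pair n D B y"
    and lt: "lex_less n (chi B y) (chi A x)"
  shows "\<not> restriction n A x \<subseteq> bier_vs n B (insert y B)"
proof
  assume covered: "restriction n A x \<subseteq> bier_vs n B (insert y B)"
  have "insert x A \<subseteq> B"
    using facet_pair_subset[OF pi Ax] covered lt by (rule insert_subset_if_restriction_covered)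
  with By proper_ideal_downward_closed[OF pi] have "insert x A \<in> D"
    unfolding is_facet_pair_def by blast
  with Ax show False unfolding is_facet_pair_def by blast
qed

text \<open>The sign vectors first differ at the least element of A \<union> {x} above x, where the
  sign drops from 1 to -1.\<close>
lemma lex_less_chi_move_up:
  assumes "insert z C = insert x A" and "x < z" and "insert x A \<subseteq> {1..n}"
  shows "lex_less n (chi C z) (chi A x)"
proof -
  let ?S = "{j \<in> insert x A. x < j}"
  define m where "m = Min ?S"
  have "finite (insert x A)" using assms(3) by (rule finite_subset) simp
  then have "finite ?S" by simp
  have "z \<in> ?S" using assms(1,2) by blast
  then have "m \<in> ?S" "m \<le> z"
    unfolding m_def using Min_in[OF \<open>finite ?S\<close>] Min_le[OF \<open>finite ?S\<close>] by blast+
  have below: "j \<le> x" if "j \<in> insert x A" "j < m" for j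
  proof (rule ccontr)
    assume "\<not> j \<le> x"
    with that(1) have "m \<le> j" unfolding m_def by (intro Min_le[OF \<open>finite ?S\<close>]) auto
    with that(2) show False by simp
  qed
  show ?thesis
  proof (rule lex_lessI)
    show "m \<in> {1..n}" using \<open>m \<in> ?S\<close> assms(3) by blast
    show "chi C z j = chi A x j" if "1 \<le> j" "j < m" for j
      using below[of j] that(2) assms(1,2) unfolding chi_def by auto
    show "chi C z m < chi A x m"
      using \<open>m \<in> ?S\<close> \<open>m \<le> z\<close> assms(1) unfolding chi_def by auto
  qed
qed

lemma earlier_facet_pair_without_Inl:
  assumes pi: "proper_ideal n D" and Ax: "is_facet_pair n D A x" and "a \<in> A" and "x < a"
  obtains C z where "is_facet_pair n D C z" and "lex_less n (chi C z) (chi A x)"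
    and "bier_vs n A (insert x A) - {Inl a} \<subseteq> bier_vs n C (insert z C)"
proof (cases "insert x (A - {a}) \<in> D")
  case True
  let ?C = "insert x (A - {a})"
  have swap: "insert a ?C = insert x A" using \<open>a \<in> A\<close> by blast
  have "is_facet_pair n D ?C a"
    using True Ax swap \<open>x < a\<close> \<open>a \<in> A\<close> facet_pair_subset[OF pi Ax]
    unfolding is_facet_pair_def by auto
  moreover have "lex_less n (chi ?C a) (chi A x)"
    using swap \<open>x < a\<close> facet_pair_subset[OF pi Ax] by (rule lex_less_chi_move_up)
  moreover have "bier_vs n A (insert x A) - {Inl a} \<subseteq> bier_vs n ?C (insert a ?C)"
    unfolding swap by (auto simp: bier_vs_def)
  ultimately show ?thesis by (rule that)
next
  case False
  let ?C = "A - {a}"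
  have "is_facet_pair n D ?C x"
    using False Ax proper_ideal_downward_closed[OF pi]
    unfolding is_facet_pair_def by auto
  moreover have "lex_less n (chi ?C x) (chi A x)"
  proof (rule lex_lessI)
    show "a \<in> {1..n}" using \<open>a \<in> A\<close> facet_pair_subset[OF pi Ax] by blast
  qed (use \<open>x < a\<close> \<open>a \<in> A\<close> in \<open>auto simp: chi_def\<close>)
  moreover have "bier_vs n A (insert x A) - {Inl a} \<subseteq> bier_vs n ?C (insert x ?C)"
    by (auto simp: bier_vs_def)
  ultimately show ?thesis by (rule that)
qed

lemma earlier_facet_pair_without_Inr:
  assumes pi: "proper_ideal n D" and Ax: "is_facet_pair n D A x"
    and "d \<in> {1..n}" and "d < x" and "d \<notin> A"
  obtains C z where "is_facet_pair n D C z" and "lex_less n (chi C z) (chi A x)"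
    and "bier_vs n A (insert x A) - {Inr d} \<subseteq> bier_vs n C (insert z C)"
proof (cases "insert d A \<in> D")
  case True
  let ?C = "insert d A"
  have "insert x ?C \<notin> D"
    using Ax proper_ideal_downward_closed[OF pi, of "insert x ?C" "insert x A"]
    unfolding is_facet_pair_def by blast
  with True Ax \<open>d < x\<close> have "is_facet_pair n D ?C x"
    unfolding is_facet_pair_def by auto
  moreover have "lex_less n (chi ?C x) (chi A x)"
    by (rule lex_lessI[OF \<open>d \<in> {1..n}\<close>]) (use \<open>d < x\<close> \<open>d \<notin> A\<close> in \<open>auto simp: chi_def\<close>)
  moreover have "bier_vs n A (insert x A) - {Inr d} \<subseteq> bier_vs n ?C (insert x ?C)"
    by (auto simp: bier_vs_def)
  ultimately show ?thesis by (rule that)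
next
  case False
  with Ax \<open>d \<in> {1..n}\<close> \<open>d \<notin> A\<close> have "is_facet_pair n D A d"
    unfolding is_facet_pair_def by auto
  moreover have "lex_less n (chi A d) (chi A x)"
    by (rule lex_lessI[OF \<open>d \<in> {1..n}\<close>]) (use \<open>d < x\<close> \<open>d \<notin> A\<close> in \<open>auto simp: chi_def\<close>)
  moreover have "bier_vs n A (insert x A) - {Inr d} \<subseteq> bier_vs n A (insert d A)"
    using \<open>d < x\<close> by (auto simp: bier_vs_def)
  ultimately show ?thesis by (rule that)
qed

lemma earlier_facet_pair_without_restriction_vertex:
  assumes "proper_ideal n D" and "is_facet_pair n D A x" and "v \<in> restriction n A x"
  obtains C z where "is_facet_pair n D C z" and "lex_less n (chi C z) (chi A x)"
    and "bier_vs n A (insert x A) - {v} \<subseteq> bier_vs n C (insert z C)"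
  using assms(3) earlier_facet_pair_without_Inl[OF assms(1,2)]
    earlier_facet_pair_without_Inr[OF assms(1,2)]
  unfolding restriction_def by blast

lemma asymp_lex_less_chi: "asymp (\<lambda>(A, x) (B, y). lex_less n (chi A x) (chi B y))"
  by (intro asympI) (auto dest: asympD[OF asymp_lex_less])

lemma lex_sorted_bier_facet_removal:
  assumes pi: "proper_ideal n D" and P: "set P = {(A, x). is_facet_pair n D A x}"
    and sorted: "sorted_wrt (\<lambda>(A, x) (B, y). lex_less n (chi A x) (chi B y)) P"
    and "i < k" and "k < length P"
  shows "\<exists>v \<in> bier_facet n (P ! k) - bier_facet n (P ! i).
           \<exists>j<k. bier_facet n (P ! k) - {v} \<subseteq> bier_facet n (P ! j)"
proof -
  obtain A x where k: "P ! k = (A, x)" by (cases "P ! k")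
  obtain B y where i: "P ! i = (B, y)" by (cases "P ! i")
  have Ax: "is_facet_pair n D A x" and By: "is_facet_pair n D B y"
    using nth_mem[of k P] nth_mem[of i P] assms k i by auto
  have "lex_less n (chi B y) (chi A x)"
    using sorted_wrt_nth_less[OF sorted \<open>i < k\<close> \<open>k < length P\<close>] i k by simp
  then obtain v where v: "v \<in> restriction n A x" "v \<notin> bier_vs n B (insert y B)"
    using restriction_not_subset_earlier_facet[OF pi Ax By] by blast
  obtain C z where "is_facet_pair n D C z" and Cz: "lex_less n (chi C z) (chi A x)"
    and removal: "bier_vs n A (insert x A) - {v} \<subseteq> bier_vs n C (insert z C)"
    using earlier_facet_pair_without_restriction_vertex[OF pi Ax v(1)] .
  then have "(C, z) \<in> set P" using P by simp
  then obtain j where j: "j < length P" "P ! j = (C, z)" by (metis in_set_conv_nth)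
  have "j < k"
    using index_less_if_sorted_wrt_asymp[OF asymp_lex_less_chi sorted j(1) \<open>k < length P\<close>] j k Cz
    by simp
  moreover have "v \<in> bier_facet n (P ! k) - bier_facet n (P ! i)"
    using v restriction_subset_bier_facet k i unfolding bier_facet_def by auto
  moreover have "bier_facet n (P ! k) - {v} \<subseteq> bier_facet n (P ! j)"
    using removal k j(2) unfolding bier_facet_def by simp
  ultimately show ?thesis by blast
qed

theorem mainTheorem8:
  fixes n :: nat and D :: "nat set set" and P :: "(nat set \<times> nat) list"
  assumes "n \<ge> 2"
    and "proper_ideal n D"
    and "set P = {(A, x). is_facet_pair n D A x}"
    and "sorted_wrt (\<lambda>(A, x) (B, y). lex_less n (chi A x) (chi B y)) P"
  shows "shelling_order (bier n D) (map (\<lambda>(A, x). bier_vs n A (insert x A)) P)"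
proof -
  have "(\<lambda>(A, x). bier_vs n A (insert x A)) = bier_facet n"
    by (simp add: bier_facet_def)
  moreover have "shelling_order (bier n D) (map (bier_facet n) P)"
  proof (rule shelling_orderI)
    show "distinct (map (bier_facet n) P)"
      using distinct_if_sorted_wrt_asymp[OF asymp_lex_less_chi assms(4)]
        inj_on_bier_facet[OF assms(2)] assms(3) by (simp add: distinct_map)
    show "set (map (bier_facet n) P) = facets (bier n D)"
      using facets_bier[OF assms(2)] assms(3) by simp
    show "\<forall>F \<in> set (map (bier_facet n) P). finite F"
      using finite_bier_facet[OF assms(2)] assms(3) by auto
  next
    fix i k assume "i < k" "k < length (map (bier_facet n) P)"
    then have "k < length P" by simp
    from lex_sorted_bier_facet_removal[OF assms(2-4) \<open>i < k\<close> this]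
    obtain v j where "v \<in> bier_facet n (P ! k) - bier_facet n (P ! i)" and "j < k"
      and "bier_facet n (P ! k) - {v} \<subseteq> bier_facet n (P ! j)"
      by blast
    with \<open>i < k\<close> \<open>k < length P\<close>
    show "\<exists>v \<in> map (bier_facet n) P ! k - map (bier_facet n) P ! i.
        \<exists>j<k. map (bier_facet n) P ! k - {v} \<subseteq> map (bier_facet n) P ! j"
      by (intro bexI[of _ v] exI[of _ j] conjI) simp_all
  qed
  ultimately show ?thesis by simp
qed

end
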